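(* For every integer $t_1\geq 2$, setting $t_2=t_1+1$, there exist a connected graph $G$ and a function $g:A\to B$ such that $fix(G)=t_1$ and $fix(F_G)=t_2$.
   Context: A set $S\subseteq V(H)$ is a fixing set of a graph $H$ if the only automorphism of $H$ fixing every vertex of $S$ is the identity; $fix(H)$ is the minimum cardinality of a fixing set of $H$. Functigraph: let $G_1,G_2$ be disjoint copies of a connected graph $G$, with $A=V(G_1)$, $B=V(G_2)$, and let $g:A\to B$ be a function. The functigraph $F_G$ has vertex set $A\cup B$ and edge set $E(G_1)\cup E(G_2)\cup\{ug(u):u\in A\}$. *)

theory Defs
  imports Main
begin

definition simple_graph :: "'a set \<Rightarrow> 'a set set \<Rightarrow> bool" where
  "simple_graph V E \<longleftrightarrow> finite V \<and> (\<forall>e\<in>E. e \<subseteq> V \<and> card e = 2)"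

definition adj_rel :: "'a set set \<Rightarrow> ('a \<times> 'a) set" where
  "adj_rel E = {(u, v). {u, v} \<in> E}"

definition connected_graph :: "'a set \<Rightarrow> 'a set set \<Rightarrow> bool" where
  "connected_graph V E \<longleftrightarrow> V \<noteq> {} \<and> (\<forall>u\<in>V. \<forall>v\<in>V. (u, v) \<in> (adj_rel E)\<^sup>*)"

definition automorphism :: "'a set \<Rightarrow> 'a set set \<Rightarrow> ('a \<Rightarrow> 'a) \<Rightarrow> bool" where
  "automorphism V E f \<longleftrightarrow> bij_betw f V V \<and>
     (\<forall>u\<in>V. \<forall>v\<in>V. {u, v} \<in> E \<longleftrightarrow> {f u, f v} \<in> E)"

definition fixing_set :: "'a set \<Rightarrow> 'a set set \<Rightarrow> 'a set \<Rightarrow> bool" where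
  "fixing_set V E S \<longleftrightarrow> S \<subseteq> V \<and>
     (\<forall>f. automorphism V E f \<and> (\<forall>s\<in>S. f s = s) \<longrightarrow> (\<forall>v\<in>V. f v = v))"

definition fix_num :: "'a set \<Rightarrow> 'a set set \<Rightarrow> nat" where
  "fix_num V E = (LEAST n. \<exists>S. fixing_set V E S \<and> card S = n)"

text \<open>Functigraph: A = Inl ` V (copy G1), B = Inr ` V (copy G2); g : V \<Rightarrow> V encodes
  the function A \<rightarrow> B, Inl u \<mapsto> Inr (g u).\<close>
definition functi_V :: "'a set \<Rightarrow> ('a + 'a) set" where
  "functi_V V = Inl ` V \<union> Inr ` V"

definition functi_E :: "'a set \<Rightarrow> 'a set set \<Rightarrow> ('a \<Rightarrow> 'a) \<Rightarrow> ('a + 'a) set set" where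
  "functi_E V E g = (\<lambda>e. Inl ` e) ` E \<union> (\<lambda>e. Inr ` e) ` E \<union> {{Inl u, Inr (g u)} | u. u \<in> V}"

end

theory Submission
  imports Defs
begin

text \<open>For \<open>t\<^sub>1 = m - 1\<close> the graph is the broom with \<open>m\<close> bristles: a star with centre \<open>0\<close> and
  leaves \<open>1, \<dots>, m + 1\<close>, the leaf \<open>m + 1\<close> starting the handle \<open>m + 1, \<dots>, 2m - 1\<close>. The
  bristles \<open>1, \<dots>, m\<close> are pairwise twins, so a fixing set misses at most one of them, and
  fixing \<open>1, \<dots>, m - 1\<close> pins the centre, then the start of the handle (degree 2 against degree 1
  of the last bristle), and then the handle vertex by vertex.

  The map \<open>g\<close> sends the centre to bristle \<open>1\<close>, every bristle to the centre, and the handle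
  vertex \<open>m + i\<close> to \<open>i + 1\<close>. In the functigraph the \<open>m\<close> bristles of the first copy and
  bristle \<open>1\<close> of the second copy are all adjacent to exactly the two centres, giving \<open>m + 1\<close>
  pairwise twins. Conversely, fixing the first-copy bristles pins the two centres (they have
  different degrees), and every further vertex is the only candidate among the common neighbours of
  vertices already fixed, walking along the two handles.\<close>

definition neighbourhood :: "'a set \<Rightarrow> 'a set set \<Rightarrow> 'a \<Rightarrow> 'a set" where
  "neighbourhood V E v = {w \<in> V. {v, w} \<in> E}"

definition degree :: "'a set \<Rightarrow> 'a set set \<Rightarrow> 'a \<Rightarrow> nat" where
  "degree V E v = card (neighbourhood V E v)"

definition twins :: "'a set \<Rightarrow> 'a set set \<Rightarrow> 'a \<Rightarrow> 'a \<Rightarrow> bool" where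
  "twins V E a b \<longleftrightarrow> neighbourhood V E a - {b} = neighbourhood V E b - {a}"

lemma simple_graph_no_loop: "simple_graph V E \<Longrightarrow> {x} \<notin> E"
  unfolding simple_graph_def by fastforce

lemma automorphism_edge_iff:
  "automorphism V E f \<Longrightarrow> u \<in> V \<Longrightarrow> v \<in> V \<Longrightarrow> {f u, f v} \<in> E \<longleftrightarrow> {u, v} \<in> E"
  unfolding automorphism_def by blast

lemma automorphism_in_V: "automorphism V E f \<Longrightarrow> v \<in> V \<Longrightarrow> f v \<in> V"
  unfolding automorphism_def using bij_betwE by blast

lemma automorphism_inj: "automorphism V E f \<Longrightarrow> u \<in> V \<Longrightarrow> v \<in> V \<Longrightarrow> f u = f v \<Longrightarrow> u = v"
  unfolding automorphism_def bij_betw_def inj_on_def by blast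

lemma automorphism_neighbourhood:
  assumes "automorphism V E f" "v \<in> V"
  shows "f ` neighbourhood V E v = neighbourhood V E (f v)"
proof
  show "f ` neighbourhood V E v \<subseteq> neighbourhood V E (f v)"
    using assms by (auto simp: neighbourhood_def automorphism_edge_iff automorphism_in_V)
  show "neighbourhood V E (f v) \<subseteq> f ` neighbourhood V E v"
  proof
    fix w assume w: "w \<in> neighbourhood V E (f v)"
    then obtain u where "u \<in> V" "w = f u"
      using assms(1) unfolding neighbourhood_def automorphism_def bij_betw_def by blast
    with w assms show "w \<in> f ` neighbourhood V E v"
      by (auto simp: neighbourhood_def automorphism_edge_iff)
  qed
qed

lemma automorphism_degree:
  assumes "automorphism V E f" "v \<in> V"
  shows "degree V E (f v) = degree V E v"
proof -
  have "inj_on f (neighbourhood V E v)"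
    using assms(1) unfolding automorphism_def bij_betw_def neighbourhood_def
    by (auto intro: inj_on_subset)
  then show ?thesis
    unfolding degree_def automorphism_neighbourhood[OF assms, symmetric] by (rule card_image)
qed

lemma automorphism_fixes_common_neighbour:
  assumes aut: "automorphism V E f" and "v \<in> V" "Y \<subseteq> V" "\<forall>y\<in>Y. f y = y" "\<forall>y\<in>Y. {y, v} \<in> E"
    and unique: "\<And>w. w \<in> V \<Longrightarrow> \<forall>y\<in>Y. {y, w} \<in> E \<Longrightarrow> degree V E w = degree V E v \<Longrightarrow> w = v \<or> f w = w"
  shows "f v = v"
proof -
  have fv: "f v \<in> V" using aut \<open>v \<in> V\<close> by (rule automorphism_in_V)
  have "\<forall>y\<in>Y. {y, f v} \<in> E"
    using assms(3-5) automorphism_edge_iff[OF aut _ \<open>v \<in> V\<close>] by (metis subsetD)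
  then have "f v = v \<or> f (f v) = f v"
    using unique[OF fv] automorphism_degree[OF aut \<open>v \<in> V\<close>] by blast
  then show ?thesis using automorphism_inj[OF aut fv \<open>v \<in> V\<close>] by blast
qed

lemma automorphism_fixes_path:
  assumes aut: "automorphism V E f" and "\<And>i. i \<le> k \<Longrightarrow> p i \<in> V" "f (p 0) = p 0"
    and "\<And>i. i < k \<Longrightarrow> {p i, p (Suc i)} \<in> E"
    and "\<And>i w. i < k \<Longrightarrow> \<forall>j\<le>i. f (p j) = p j \<Longrightarrow> w \<in> V \<Longrightarrow> {p i, w} \<in> E \<Longrightarrow>
           w = p (Suc i) \<or> f w = w"
  shows "\<forall>i\<le>k. f (p i) = p i"
proof (intro allI impI)
  fix i assume "i \<le> k"
  then show "f (p i) = p i"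
  proof (induction i rule: less_induct)
    case (less i)
    show ?case
    proof (cases i)
      case (Suc h)
      with less have "\<forall>j\<le>h. f (p j) = p j" by simp
      with Suc less.prems show ?thesis
        by (intro automorphism_fixes_common_neighbour[OF aut, of _ "{p h}"]) (auto simp: assms)
    qed (simp add: assms)
  qed
qed

lemma swap_twins_automorphism:
  assumes "simple_graph V E" "a \<in> V" "b \<in> V" "twins V E a b"
  shows "automorphism V E (id(a := b, b := a))"
  unfolding automorphism_def
proof
  show "bij_betw (id(a := b, b := a)) V V"
    by (rule bij_betw_byWitness[where f' = "id(a := b, b := a)"]) (use assms in auto)
  have edge: "{a, w} \<in> E \<longleftrightarrow> {b, w} \<in> E" if "w \<in> V" "w \<noteq> a" "w \<noteq> b" for w
    using assms(4) that unfolding twins_def neighbourhood_def by blast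
  have edge': "{w, a} \<in> E \<longleftrightarrow> {w, b} \<in> E" if "w \<in> V" "w \<noteq> a" "w \<noteq> b" for w
    using edge[OF that] by (simp add: insert_commute)
  have swap: "{b, a} = {a, b}" by (rule insert_commute)
  have "{u, v} \<in> E \<longleftrightarrow> {(id(a := b, b := a)) u, (id(a := b, b := a)) v} \<in> E"
    if "u \<in> V" "v \<in> V" for u v
    using that edge edge' swap simple_graph_no_loop[OF assms(1)]
    by (cases "u = a \<or> u = b"; cases "v = a \<or> v = b") auto
  then show "\<forall>u\<in>V. \<forall>v\<in>V. {u, v} \<in> E \<longleftrightarrow> {(id(a := b, b := a)) u, (id(a := b, b := a)) v} \<in> E"
    by blast
qed

lemma card_twin_class_le_fixing_set:
  assumes "simple_graph V E" "fixing_set V E S" "K \<subseteq> V"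
    and twins: "\<And>a b. a \<in> K \<Longrightarrow> b \<in> K \<Longrightarrow> twins V E a b"
  shows "card K \<le> card S + 1"
proof -
  have fin: "finite K" "finite S"
    using assms(1-3) finite_subset unfolding simple_graph_def fixing_set_def by blast+
  have "a = b" if "a \<in> K - S" "b \<in> K - S" for a b
  proof -
    have "automorphism V E (id(a := b, b := a))"
      using that assms(3) by (intro swap_twins_automorphism assms(1) twins) auto
    moreover have "\<forall>s\<in>S. (id(a := b, b := a)) s = s" using that by auto
    ultimately have "(id(a := b, b := a)) a = a"
      using assms(2) that(1) \<open>K \<subseteq> V\<close> unfolding fixing_set_def by blast
    then show "a = b" by (simp split: if_split_asm)
  qed
  then have "card (K - S) \<le> 1" using fin by (simp add: card_le_Suc0_iff_eq)
  moreover have "card (K \<inter> S) \<le> card S" using fin by (simp add: card_mono)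
  moreover have "card K \<le> card (K - S) + card (K \<inter> S)"
    using card_Un_le[of "K - S" "K \<inter> S"] by (simp add: Un_Diff_Int)
  ultimately show ?thesis by linarith
qed

lemma fix_num_eqI:
  assumes "fixing_set V E S" "card S = n" "\<And>S'. fixing_set V E S' \<Longrightarrow> n \<le> card S'"
  shows "fix_num V E = n"
  unfolding fix_num_def by (rule Least_equality) (use assms in auto)

lemma functi_V_iff [simp]:
  "Inl x \<in> functi_V V \<longleftrightarrow> x \<in> V" "Inr x \<in> functi_V V \<longleftrightarrow> x \<in> V"
  unfolding functi_V_def by auto

lemma doubleton_eq_image_iff:
  "{Inl a, Inl b} = Inl ` e \<longleftrightarrow> e = {a, b}" "{Inr a, Inr b} = Inr ` e \<longleftrightarrow> e = {a, b}"
  using inj_image_eq_iff[OF inj_Inl, of "{a, b}" e] inj_image_eq_iff[OF inj_Inr, of "{a, b}" e]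
  by (simp_all only: image_insert image_empty eq_commute[of "{a, b}" e])

lemma doubleton_neq_image: "{Inl a, x} \<noteq> Inr ` e" "{Inr a, x} \<noteq> Inl ` e"
  by auto

lemma functi_E_iff [simp]:
  "{Inl a, Inl b} \<in> functi_E V E g \<longleftrightarrow> {a, b} \<in> E"
  "{Inr a, Inr b} \<in> functi_E V E g \<longleftrightarrow> {a, b} \<in> E"
  "{Inl a, Inr b} \<in> functi_E V E g \<longleftrightarrow> a \<in> V \<and> b = g a"
  "{Inr b, Inl a} \<in> functi_E V E g \<longleftrightarrow> a \<in> V \<and> b = g a"
  unfolding functi_E_def
  by (simp_all add: image_iff doubleton_eq_image_iff doubleton_neq_image doubleton_eq_iff, blast+)

lemma simple_graph_functigraph:
  assumes "simple_graph V E" "\<forall>u\<in>V. g u \<in> V"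
  shows "simple_graph (functi_V V) (functi_E V E g)"
  using assms unfolding simple_graph_def functi_V_def functi_E_def
  by (auto simp: card_image subset_eq)

lemma functi_E_Inl_iff:
  "{Inl a, w} \<in> functi_E V E g \<longleftrightarrow> (\<exists>b. w = Inl b \<and> {a, b} \<in> E) \<or> (a \<in> V \<and> w = Inr (g a))"
  by (cases w) simp_all

lemma functi_E_Inr_iff:
  "{Inr b, w} \<in> functi_E V E g \<longleftrightarrow> (\<exists>a. w = Inr a \<and> {b, a} \<in> E) \<or> (\<exists>a. a \<in> V \<and> b = g a \<and> w = Inl a)"
  by (cases w) (simp_all add: conj_commute)

lemma sym_adj_rel: "sym (adj_rel E)"
  unfolding sym_def adj_rel_def by (auto simp: insert_commute)

lemma connected_graphI_centre:
  assumes "c \<in> V" "\<And>u. u \<in> V \<Longrightarrow> (u, c) \<in> (adj_rel E)\<^sup>*"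
  shows "connected_graph V E"
  unfolding connected_graph_def
proof (intro conjI ballI)
  fix u v assume "u \<in> V" "v \<in> V"
  have "(u, c) \<in> (adj_rel E)\<^sup>*" using assms(2) \<open>u \<in> V\<close> .
  moreover have "(c, v) \<in> (adj_rel E)\<^sup>*"
    using assms(2)[OF \<open>v \<in> V\<close>] by (rule symD[OF sym_rtrancl[OF sym_adj_rel]])
  ultimately show "(u, v) \<in> (adj_rel E)\<^sup>*" by (rule rtrancl_trans)
qed (use assms(1) in blast)

definition broom_V :: "nat \<Rightarrow> nat set" where
  "broom_V m = {..<2 * m}"

definition broom_E :: "nat \<Rightarrow> nat set set" where
  "broom_E m = {{0, i} | i. 1 \<le> i \<and> i \<le> m + 1} \<union> {{i, Suc i} | i. m + 1 \<le> i \<and> Suc i < 2 * m}"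

definition broom_map :: "nat \<Rightarrow> nat \<Rightarrow> nat" where
  "broom_map m x = (if x = 0 then 1 else if x \<le> m then 0 else x - m + 1)"

lemma broom_V_iff [simp]: "x \<in> broom_V m \<longleftrightarrow> x < 2 * m"
  by (simp add: broom_V_def)

lemma broom_adj [simp]:
  "{u, v} \<in> broom_E m \<longleftrightarrow> (u = 0 \<and> 1 \<le> v \<and> v \<le> m + 1) \<or> (v = 0 \<and> 1 \<le> u \<and> u \<le> m + 1)
     \<or> (m + 1 \<le> u \<and> v = Suc u \<and> v < 2 * m) \<or> (m + 1 \<le> v \<and> u = Suc v \<and> u < 2 * m)"
  unfolding broom_E_def by (auto simp: doubleton_eq_iff)

lemma simple_graph_broom:
  assumes "m \<ge> 2" shows "simple_graph (broom_V m) (broom_E m)"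
proof -
  have "e \<subseteq> broom_V m \<and> card e = 2" if e: "e \<in> broom_E m" for e
  proof -
    consider i where "e = {0, i}" "1 \<le> i" "i \<le> m + 1" | i where "e = {i, Suc i}" "Suc i < 2 * m"
      using e unfolding broom_E_def by blast
    then show ?thesis using assms by cases auto
  qed
  then show ?thesis unfolding simple_graph_def by (simp add: broom_V_def)
qed

lemma broom_map_closed: "m \<ge> 1 \<Longrightarrow> \<forall>u\<in>broom_V m. broom_map m u \<in> broom_V m"
  by (auto simp: broom_map_def)

lemma connected_broom:
  assumes "m \<ge> 1" shows "connected_graph (broom_V m) (broom_E m)"
proof (rule connected_graphI_centre)
  show "0 \<in> broom_V m" using assms by simp
  fix u assume "u \<in> broom_V m"
  then show "(u, 0) \<in> (adj_rel (broom_E m))\<^sup>*"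
  proof (induction u rule: less_induct)
    case (less u)
    consider "u = 0" | "1 \<le> u \<and> u \<le> m + 1" | "m + 1 < u" by linarith
    then show ?case
    proof cases
      case 2 then show ?thesis by (intro r_into_rtrancl) (simp add: adj_rel_def)
    next
      case 3
      then have "(u, u - 1) \<in> adj_rel (broom_E m)" using less.prems by (simp add: adj_rel_def) arith
      moreover have "(u - 1, 0) \<in> (adj_rel (broom_E m))\<^sup>*" using 3 less by simp
      ultimately show ?thesis by (rule converse_rtrancl_into_rtrancl)
    qed simp
  qed
qed

lemma neighbourhood_broom_bristle:
  "1 \<le> i \<Longrightarrow> i \<le> m \<Longrightarrow> neighbourhood (broom_V m) (broom_E m) i = {0}"
  by (auto simp: neighbourhood_def)

lemma degree_broom_bristle: "1 \<le> i \<Longrightarrow> i \<le> m \<Longrightarrow> degree (broom_V m) (broom_E m) i = 1"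
  by (simp add: degree_def neighbourhood_broom_bristle)

lemma degree_broom_handle_start:
  assumes "m \<ge> 3" shows "degree (broom_V m) (broom_E m) (m + 1) = 2"
proof -
  have "neighbourhood (broom_V m) (broom_E m) (m + 1) = {0, m + 2}"
    using assms by (auto simp: neighbourhood_def)
  then show ?thesis by (simp add: degree_def)
qed

locale bristle_fixing_broom_automorphism =
  fixes m :: nat and f :: "nat \<Rightarrow> nat"
  assumes m_ge: "m \<ge> 3"
    and aut: "automorphism (broom_V m) (broom_E m) f"
    and fixes_bristles: "\<And>i. 1 \<le> i \<Longrightarrow> i \<le> m - 1 \<Longrightarrow> f i = i"
begin

lemma fixes_centre: "f 0 = 0"
  by (rule automorphism_fixes_common_neighbour[OF aut, of _ "{1}"]) (use m_ge fixes_bristles in auto)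

lemma fixes_handle_start: "f (m + 1) = m + 1"
proof (rule automorphism_fixes_common_neighbour[OF aut, of _ "{0}"])
  fix w assume w: "w \<in> broom_V m" "\<forall>y\<in>{0}. {y, w} \<in> broom_E m"
    and deg: "degree (broom_V m) (broom_E m) w = degree (broom_V m) (broom_E m) (m + 1)"
  have "w \<noteq> m"
  proof
    assume "w = m"
    have "(1::nat) = degree (broom_V m) (broom_E m) m"
      using m_ge by (simp add: degree_broom_bristle)
    also have "\<dots> = degree (broom_V m) (broom_E m) (m + 1)" using deg \<open>w = m\<close> by simp
    also have "\<dots> = 2" using m_ge by (rule degree_broom_handle_start)
    finally show False by simp
  qed
  with w fixes_bristles[of w] show "w = m + 1 \<or> f w = w" by (cases "w \<le> m - 1") auto
qed (use m_ge fixes_centre in auto)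

lemma fixes_handle: "\<forall>i\<le>m - 2. f (m + 1 + i) = m + 1 + i"
proof (rule automorphism_fixes_path[OF aut])
  fix i w assume "i < m - 2" "\<forall>j\<le>i. f (m + 1 + j) = m + 1 + j" "w \<in> broom_V m"
    "{m + 1 + i, w} \<in> broom_E m"
  then show "w = m + 1 + Suc i \<or> f w = w"
    using fixes_centre by (cases i) (auto dest: spec[of _ "i - 1"])
qed (use m_ge fixes_handle_start in auto)

lemma fixes_last_bristle: "f m = m"
proof (rule automorphism_fixes_common_neighbour[OF aut, of _ "{0}"])
  fix w assume "w \<in> broom_V m" "\<forall>y\<in>{0}. {y, w} \<in> broom_E m"
  with fixes_bristles[of w] fixes_handle_start show "w = m \<or> f w = w"
    by (cases "w \<le> m - 1"; cases "w = m + 1") auto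
qed (use m_ge fixes_centre in auto)

lemma fixes_all: "v \<in> broom_V m \<Longrightarrow> f v = v"
proof -
  assume "v \<in> broom_V m"
  then consider "v = 0" | "1 \<le> v \<and> v \<le> m - 1" | "v = m" | "m + 1 \<le> v \<and> v - (m + 1) \<le> m - 2"
    by fastforce
  then show "f v = v"
  proof cases
    case 4 then show ?thesis using fixes_handle by (metis le_add_diff_inverse)
  qed (use fixes_centre fixes_bristles fixes_last_bristle in auto)
qed

end

lemma fixing_set_broom:
  assumes "m \<ge> 3" shows "fixing_set (broom_V m) (broom_E m) {1..m - 1}"
  unfolding fixing_set_def
proof (intro conjI allI impI ballI)
  show "{1..m - 1} \<subseteq> broom_V m" by auto
  fix f v
  assume "automorphism (broom_V m) (broom_E m) f \<and> (\<forall>s\<in>{1..m - 1}. f s = s)"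
  then have "bristle_fixing_broom_automorphism m f" using assms by unfold_locales auto
  moreover assume "v \<in> broom_V m"
  ultimately show "f v = v" by (rule bristle_fixing_broom_automorphism.fixes_all)
qed

lemma fix_num_broom:
  assumes "m \<ge> 3" shows "fix_num (broom_V m) (broom_E m) = m - 1"
proof (rule fix_num_eqI[OF fixing_set_broom[OF assms]])
  fix S assume S: "fixing_set (broom_V m) (broom_E m) S"
  have "simple_graph (broom_V m) (broom_E m)" using assms by (simp add: simple_graph_broom)
  then have "card {1..m} \<le> card S + 1"
    by (rule card_twin_class_le_fixing_set[OF _ S])
      (use assms in \<open>auto simp: twins_def neighbourhood_broom_bristle\<close>)
  then show "m - 1 \<le> card S" by simp
qed simp

abbreviation broom_functigraph_V :: "nat \<Rightarrow> (nat + nat) set" where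
  "broom_functigraph_V m \<equiv> functi_V (broom_V m)"

abbreviation broom_functigraph_E :: "nat \<Rightarrow> (nat + nat) set set" where
  "broom_functigraph_E m \<equiv> functi_E (broom_V m) (broom_E m) (broom_map m)"

lemma neighbourhood_broom_functigraph_twin:
  assumes "m \<ge> 3" "k \<in> Inl ` {1..m} \<union> {Inr 1}"
  shows "neighbourhood (broom_functigraph_V m) (broom_functigraph_E m) k = {Inl 0, Inr 0}"
  using assms
  by (auto simp: neighbourhood_def functi_E_Inl_iff functi_E_Inr_iff broom_map_def split: if_splits)

lemma neighbourhood_broom_functigraph_Inl_0:
  assumes "m \<ge> 3"
  shows "neighbourhood (broom_functigraph_V m) (broom_functigraph_E m) (Inl 0) = Inl ` {1..m + 1} \<union> {Inr 1}"
  using assms by (auto simp: neighbourhood_def functi_E_Inl_iff broom_map_def)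

lemma neighbourhood_broom_functigraph_Inr_0:
  assumes "m \<ge> 3"
  shows "neighbourhood (broom_functigraph_V m) (broom_functigraph_E m) (Inr 0) = Inl ` {1..m} \<union> Inr ` {1..m + 1}"
  using assms by (auto simp: neighbourhood_def functi_E_Inr_iff broom_map_def split: if_split_asm)
    (metis One_nat_def not_one_le_zero)

lemma degree_broom_functigraph_Inl_0:
  assumes "m \<ge> 3" shows "degree (broom_functigraph_V m) (broom_functigraph_E m) (Inl 0) = m + 2"
  using assms by (simp add: degree_def neighbourhood_broom_functigraph_Inl_0 card_image image_iff)

lemma degree_broom_functigraph_Inr_0:
  assumes "m \<ge> 3" shows "degree (broom_functigraph_V m) (broom_functigraph_E m) (Inr 0) = 2 * m + 1"
  unfolding degree_def neighbourhood_broom_functigraph_Inr_0[OF assms]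
  by (subst card_Un_disjoint) (auto simp: card_image)

locale bristle_fixing_functigraph_automorphism =
  fixes m :: nat and f :: "nat + nat \<Rightarrow> nat + nat"
  assumes m_ge: "m \<ge> 3"
    and aut: "automorphism (broom_functigraph_V m) (broom_functigraph_E m) f"
    and fixes_bristles: "\<And>i. 1 \<le> i \<Longrightarrow> i \<le> m \<Longrightarrow> f (Inl i) = Inl i"
begin

lemma fixes_Inr_0: "f (Inr 0) = Inr 0"
proof (rule automorphism_fixes_common_neighbour[OF aut, of _ "{Inl 1}"])
  fix w assume "w \<in> broom_functigraph_V m" "\<forall>y\<in>{Inl 1}. {y, w} \<in> broom_functigraph_E m"
    and deg: "degree (broom_functigraph_V m) (broom_functigraph_E m) w
      = degree (broom_functigraph_V m) (broom_functigraph_E m) (Inr 0)"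
  then have "w = Inl 0 \<or> w = Inr 0"
    using neighbourhood_broom_functigraph_twin[OF m_ge, of "Inl 1"] m_ge
    by (auto simp: neighbourhood_def)
  moreover have "w \<noteq> Inl 0"
    using deg m_ge degree_broom_functigraph_Inl_0[OF m_ge] degree_broom_functigraph_Inr_0[OF m_ge] by auto
  ultimately show "w = Inr 0 \<or> f w = w" by blast
qed (use m_ge fixes_bristles in \<open>auto simp: broom_map_def\<close>)

lemma fixes_Inl_0: "f (Inl 0) = Inl 0"
proof (rule automorphism_fixes_common_neighbour[OF aut, of _ "{Inl 1}"])
  fix w assume "w \<in> broom_functigraph_V m" "\<forall>y\<in>{Inl 1}. {y, w} \<in> broom_functigraph_E m"
  then have "w = Inl 0 \<or> w = Inr 0"
    using neighbourhood_broom_functigraph_twin[OF m_ge, of "Inl 1"] m_ge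
    by (auto simp: neighbourhood_def)
  then show "w = Inl 0 \<or> f w = w" using fixes_Inr_0 by blast
qed (use m_ge fixes_bristles in auto)

lemma fixes_Inr_1: "f (Inr 1) = Inr 1"
  by (rule automorphism_fixes_common_neighbour[OF aut, of _ "{Inl 0, Inr 0}"])
    (use m_ge fixes_bristles fixes_Inl_0 fixes_Inr_0 in
      \<open>auto simp: functi_E_Inl_iff functi_E_Inr_iff broom_map_def split: if_split_asm\<close>)

lemma fixes_Inr_middle_if_fixes_Inl_handle:
  assumes "2 \<le> x" "x \<le> m" "f (Inl (m + x - 1)) = Inl (m + x - 1)"
  shows "f (Inr x) = Inr x"
  by (rule automorphism_fixes_common_neighbour[OF aut, of _ "{Inl (m + x - 1), Inr 0}"])
    (use assms m_ge fixes_Inr_0 in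
      \<open>auto simp: functi_E_Inl_iff functi_E_Inr_iff broom_map_def split: if_split_asm\<close>)

lemma fixes_Inl_handle: "\<forall>i\<le>m - 2. f (Inl (m + 1 + i)) = Inl (m + 1 + i)"
proof (rule automorphism_fixes_path[OF aut])
  show "f (Inl (m + 1 + 0)) = Inl (m + 1 + 0)"
  proof (rule automorphism_fixes_common_neighbour[OF aut, of _ "{Inl 0}"])
    fix w assume "w \<in> broom_functigraph_V m" "\<forall>y\<in>{Inl 0}. {y, w} \<in> broom_functigraph_E m"
    then have "w \<in> Inl ` {1..m + 1} \<union> {Inr 1}"
      using neighbourhood_broom_functigraph_Inl_0[OF m_ge] by (auto simp: neighbourhood_def)
    then show "w = Inl (m + 1 + 0) \<or> f w = w"
      using fixes_bristles fixes_Inr_1 by (auto simp: le_Suc_eq)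
  qed (use m_ge fixes_Inl_0 in auto)
next
  fix i w assume i: "i < m - 2" and fixed: "\<forall>j\<le>i. f (Inl (m + 1 + j)) = Inl (m + 1 + j)"
    and "w \<in> broom_functigraph_V m" "{Inl (m + 1 + i), w} \<in> broom_functigraph_E m"
  then consider "w = Inl 0" | "w = Inl (m + i)" "i > 0" | "w = Inl (m + 1 + Suc i)" | "w = Inr (i + 2)"
    by (auto simp: functi_E_Inl_iff broom_map_def)
  then show "w = Inl (m + 1 + Suc i) \<or> f w = w"
  proof cases
    case 2 then show ?thesis using fixed[rule_format, of "i - 1"] by simp
  next
    case 4 then show ?thesis
      using i fixed fixes_Inr_middle_if_fixes_Inl_handle[of "i + 2"] by simp
  qed (use fixes_Inl_0 in auto)
qed (use m_ge in \<open>auto simp: functi_E_Inl_iff\<close>)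

lemma fixes_Inr_middle:
  assumes "2 \<le> x" "x \<le> m" shows "f (Inr x) = Inr x"
proof (rule fixes_Inr_middle_if_fixes_Inl_handle[OF assms])
  have "m + 1 + (x - 2) = m + x - 1" using assms(1) by simp
  then show "f (Inl (m + x - 1)) = Inl (m + x - 1)"
    using fixes_Inl_handle assms(2) by (metis diff_le_mono)
qed

lemma fixes_Inr_handle: "\<forall>i\<le>m - 2. f (Inr (m + 1 + i)) = Inr (m + 1 + i)"
proof (rule automorphism_fixes_path[OF aut])
  show "f (Inr (m + 1 + 0)) = Inr (m + 1 + 0)"
  proof (rule automorphism_fixes_common_neighbour[OF aut, of _ "{Inr 0}"])
    fix w assume "w \<in> broom_functigraph_V m" "\<forall>y\<in>{Inr 0}. {y, w} \<in> broom_functigraph_E m"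
    then have "w \<in> Inl ` {1..m} \<union> Inr ` {1..m + 1}"
      using neighbourhood_broom_functigraph_Inr_0[OF m_ge] by (auto simp: neighbourhood_def)
    then show "w = Inr (m + 1 + 0) \<or> f w = w"
      using fixes_bristles fixes_Inr_1 fixes_Inr_middle by (cases "w = Inr 1") (auto simp: le_Suc_eq)
  qed (use m_ge fixes_Inr_0 in auto)
next
  fix i w assume "i < m - 2" and fixed: "\<forall>j\<le>i. f (Inr (m + 1 + j)) = Inr (m + 1 + j)"
    and "w \<in> broom_functigraph_V m" "{Inr (m + 1 + i), w} \<in> broom_functigraph_E m"
  then consider "w = Inr 0" | "w = Inr (m + i)" "i > 0" | "w = Inr (m + 1 + Suc i)"
    by (auto simp: functi_E_Inr_iff broom_map_def split: if_split_asm)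
  then show "w = Inr (m + 1 + Suc i) \<or> f w = w"
  proof cases
    case 2 then show ?thesis using fixed[rule_format, of "i - 1"] by simp
  qed (use fixes_Inr_0 in auto)
qed (use m_ge in \<open>auto simp: functi_E_Inr_iff\<close>)

lemma fixes_all: "v \<in> broom_functigraph_V m \<Longrightarrow> f v = v"
proof (induction v)
  case (Inl x)
  then consider "x = 0" | "1 \<le> x \<and> x \<le> m" | "x = m + 1 + (x - (m + 1))" "x - (m + 1) \<le> m - 2"
    by fastforce
  then show ?case
  proof cases
    case 3 then show ?thesis using fixes_Inl_handle by metis
  qed (use fixes_Inl_0 fixes_bristles in auto)
next
  case (Inr x)
  then consider "x = 0" | "x = 1" | "2 \<le> x \<and> x \<le> m" | "x = m + 1 + (x - (m + 1))" "x - (m + 1) \<le> m - 2"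
    by fastforce
  then show ?case
  proof cases
    case 4 then show ?thesis using fixes_Inr_handle by metis
  qed (use fixes_Inr_0 fixes_Inr_1 fixes_Inr_middle in auto)
qed

end

lemma fixing_set_broom_functigraph:
  assumes "m \<ge> 3"
  shows "fixing_set (broom_functigraph_V m) (broom_functigraph_E m) (Inl ` {1..m})"
  unfolding fixing_set_def
proof (intro conjI allI impI ballI)
  show "Inl ` {1..m} \<subseteq> broom_functigraph_V m" using assms by auto
  fix f v
  assume "automorphism (broom_functigraph_V m) (broom_functigraph_E m) f \<and> (\<forall>s\<in>Inl ` {1..m}. f s = s)"
  then have "bristle_fixing_functigraph_automorphism m f" using assms by unfold_locales auto
  moreover assume "v \<in> broom_functigraph_V m"
  ultimately show "f v = v" by (rule bristle_fixing_functigraph_automorphism.fixes_all)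
qed

lemma simple_graph_broom_functigraph:
  assumes "m \<ge> 3" shows "simple_graph (broom_functigraph_V m) (broom_functigraph_E m)"
proof (rule simple_graph_functigraph)
  show "simple_graph (broom_V m) (broom_E m)" using assms by (simp add: simple_graph_broom)
  show "\<forall>u\<in>broom_V m. broom_map m u \<in> broom_V m" using assms by (intro broom_map_closed) simp
qed

lemma card_fixing_set_broom_functigraph:
  assumes "m \<ge> 3" "fixing_set (broom_functigraph_V m) (broom_functigraph_E m) S"
  shows "m \<le> card S"
proof -
  have "card (Inl ` {1..m} \<union> {Inr 1 :: nat + nat}) \<le> card S + 1"
    by (rule card_twin_class_le_fixing_set[OF simple_graph_broom_functigraph[OF assms(1)] assms(2)])
      (use assms(1) in \<open>auto simp: twins_def neighbourhood_broom_functigraph_twin\<close>)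
  moreover have "card (Inl ` {1..m} \<union> {Inr 1 :: nat + nat}) = m + 1"
    by (simp add: card_image image_iff)
  ultimately show ?thesis by simp
qed

lemma fix_num_broom_functigraph:
  assumes "m \<ge> 3" shows "fix_num (broom_functigraph_V m) (broom_functigraph_E m) = m"
  by (rule fix_num_eqI[OF fixing_set_broom_functigraph[OF assms] _ card_fixing_set_broom_functigraph[OF assms]])
    (simp add: card_image)

theorem lemma2p7:
  fixes t1 :: nat
  assumes "t1 \<ge> 2"
  shows "\<exists>(V :: nat set) E g. simple_graph V E \<and> connected_graph V E \<and>
           (\<forall>u\<in>V. g u \<in> V) \<and>
           fix_num V E = t1 \<and>
           fix_num (functi_V V) (functi_E V E g) = t1 + 1"
proof (intro exI conjI)
  have m: "t1 + 1 \<ge> 3" using assms by simp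
  show "simple_graph (broom_V (t1 + 1)) (broom_E (t1 + 1))" using m by (simp add: simple_graph_broom)
  show "connected_graph (broom_V (t1 + 1)) (broom_E (t1 + 1))" using m by (simp add: connected_broom)
  show "\<forall>u\<in>broom_V (t1 + 1). broom_map (t1 + 1) u \<in> broom_V (t1 + 1)"
    using m by (intro broom_map_closed) simp
  show "fix_num (broom_V (t1 + 1)) (broom_E (t1 + 1)) = t1" using fix_num_broom[OF m] by simp
  show "fix_num (broom_functigraph_V (t1 + 1)) (broom_functigraph_E (t1 + 1)) = t1 + 1"
    using m by (rule fix_num_broom_functigraph)
qed

end
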